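(* If $f:[-1,1]\to\mathbb{R}$ is $3$-convex, then \[ f\Bigl(-\tfrac{\sqrt3}{3}\Bigr)+f\Bigl(\tfrac{\sqrt3}{3}\Bigr)\;\le\;\tfrac{2}{3}\Bigl(f\bigl(-\tfrac{\sqrt2}{2}\bigr)+f(0)+f\bigl(\tfrac{\sqrt2}{2}\bigr)\Bigr)\;\le\;\int_{-1}^1 f(x)\,dx . \]
   Context: Divided differences are defined recursively by $[x_1;f]:=f(x_1)$ and $[x_1,\dots,x_{m+1};f]:=\frac{[x_2,\dots,x_{m+1};f]-[x_1,\dots,x_m;f]}{x_{m+1}-x_1}$ for pairwise distinct points. For $m\in\mathbb{N}$, a function $f$ on an interval $I$ is called $m$-convex if $[x_1,\dots,x_{m+2};f]\ge 0$ for all pairwise distinct $x_1,\dots,x_{m+2}\in I$. Integrals are Riemann integrals (an $m$-convex function on a compact interval is Riemann integrable). *)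

theory Defs
  imports "HOL-Analysis.Analysis"
begin

fun divdiff :: "real list \<Rightarrow> (real \<Rightarrow> real) \<Rightarrow> real" where
  "divdiff [] f = 0"
| "divdiff [x] f = f x"
| "divdiff (x # y # ys) f =
     (divdiff (y # ys) f - divdiff (butlast (x # y # ys)) f) / (last (y # ys) - x)"

definition m_convex_on :: "nat \<Rightarrow> real set \<Rightarrow> (real \<Rightarrow> real) \<Rightarrow> bool" where
  "m_convex_on m I f \<longleftrightarrow>
     (\<forall>xs. length xs = m + 2 \<and> distinct xs \<and> set xs \<subseteq> I \<longrightarrow> divdiff xs f \<ge> 0)"

end

theory Submission
  imports Defs
begin

text \<open>Interpolate at the nodes \<open>-a, 0, a\<close> with \<open>a = \<surd>2/2\<close>: Newton's formula gives
  \<open>f x = P x + \<omega> x * D x\<close> with \<open>\<omega> x = x (x\<^sup>2 - a\<^sup>2)\<close> and \<open>D x = [-a,0,a,x;f]\<close>. The difference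
  quotients of \<open>D\<close> are divided differences of order four, so 3-convexity makes \<open>D\<close> nondecreasing
  and \<open>E x = D x - D (-x)\<close> nonnegative and nondecreasing for \<open>x > 0\<close>. In the even part
  \<open>f x + f (-x) = 2 f 0 + 2 x\<^sup>2 (f a + f (-a) - 2 f 0) + \<omega> x * E x\<close> the last term is \<open>\<le> 0\<close> at
  \<open>x = \<surd>3/3 < a\<close>, which gives the left inequality. Since \<open>\<omega>\<close> changes sign at \<open>a\<close> and \<open>E\<close> is
  monotone, \<open>\<omega> x * E x \<ge> \<omega> x * L\<close> on \<open>[0,1]\<close> for a suitable constant \<open>L\<close>; integrating over
  \<open>[0,1]\<close>, where \<open>\<omega>\<close> has integral zero, gives the right inequality.\<close>

lemma divdiff_3_lagrange:
  assumes "distinct [p, q, r]"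
  shows "divdiff [p, q, r] f =
    f p / ((p - q) * (p - r)) + f q / ((q - p) * (q - r)) + f r / ((r - p) * (r - q))"
proof -
  have "p - q \<noteq> 0" "p - r \<noteq> 0" "q - r \<noteq> 0" "q - p \<noteq> 0" "r - p \<noteq> 0" "r - q \<noteq> 0"
    using assms by auto
  then show ?thesis by (simp add: divide_simps mult_eq_0_iff) (simp add: algebra_simps)
qed

lemma divdiff_4_lagrange:
  assumes "distinct [p, q, r, s]"
  shows "divdiff [p, q, r, s] f =
    f p / ((p - q) * (p - r) * (p - s)) + f q / ((q - p) * (q - r) * (q - s)) +
    f r / ((r - p) * (r - q) * (r - s)) + f s / ((s - p) * (s - q) * (s - r))"
proof -
  have nz: "p - q \<noteq> 0" "p - r \<noteq> 0" "q - r \<noteq> 0" "q - p \<noteq> 0" "r - p \<noteq> 0" "r - q \<noteq> 0"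
    "p - s \<noteq> 0" "q - s \<noteq> 0" "r - s \<noteq> 0" "s - p \<noteq> 0" "s - q \<noteq> 0" "s - r \<noteq> 0"
    using assms by auto
  have "distinct [q, r, s]" "distinct [p, q, r]" using assms by auto
  have "divdiff [p, q, r, s] f = (divdiff [q, r, s] f - divdiff [p, q, r] f) / (s - p)"
    by simp
  also have "\<dots> =
      f p * (- 1 / ((p - q) * (p - r)) / (s - p)) +
      f q * ((1 / ((q - r) * (q - s)) - 1 / ((q - p) * (q - r))) / (s - p)) +
      f r * ((1 / ((r - q) * (r - s)) - 1 / ((r - p) * (r - q))) / (s - p)) +
      f s * (1 / ((s - q) * (s - r)) / (s - p))"
    unfolding divdiff_3_lagrange[OF \<open>distinct [q, r, s]\<close>] divdiff_3_lagrange[OF \<open>distinct [p, q, r]\<close>]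
    by (simp only: divide_inverse) algebra
  also have "\<dots> = f p / ((p - q) * (p - r) * (p - s)) + f q / ((q - p) * (q - r) * (q - s)) +
      f r / ((r - p) * (r - q) * (r - s)) + f s / ((s - p) * (s - q) * (s - r))"
  proof -
    have "- 1 / ((p - q) * (p - r)) / (s - p) = 1 / ((p - q) * (p - r) * (p - s))"
      "(1 / ((q - r) * (q - s)) - 1 / ((q - p) * (q - r))) / (s - p) = 1 / ((q - p) * (q - r) * (q - s))"
      "(1 / ((r - q) * (r - s)) - 1 / ((r - p) * (r - q))) / (s - p) = 1 / ((r - p) * (r - q) * (r - s))"
      "1 / ((s - q) * (s - r)) / (s - p) = 1 / ((s - p) * (s - q) * (s - r))"
      using nz by (simp_all add: divide_simps mult_eq_0_iff; simp add: algebra_simps)+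
    then show ?thesis by simp
  qed
  finally show ?thesis .
qed

lemma divdiff_4_rotate:
  assumes "distinct [s, p, q, r]"
  shows "divdiff [s, p, q, r] f = divdiff [p, q, r, s] f"
proof -
  have "distinct [p, q, r, s]" using assms by auto
  then show ?thesis
    unfolding divdiff_4_lagrange[OF assms] divdiff_4_lagrange[OF \<open>distinct [p, q, r, s]\<close>]
    by (simp add: mult_ac add_ac)
qed

lemma divdiff_5_common_nodes:
  assumes "distinct [x, p, q, r, y]"
  shows "divdiff [x, p, q, r, y] f = (divdiff [p, q, r, y] f - divdiff [p, q, r, x] f) / (y - x)"
  using divdiff_4_rotate[of x p q r f] assms by simp

text \<open>No restriction on \<open>x\<close> is needed: at a node the four-point divided difference is a junk
  value, but it is multiplied by zero.\<close>

lemma newton_interpolation_3: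
  assumes "distinct [p, q, r]"
  shows "f x = f p + (x - p) * divdiff [p, q] f + (x - p) * (x - q) * divdiff [p, q, r] f
    + (x - p) * (x - q) * (x - r) * divdiff [p, q, r, x] f"
proof (cases "x \<in> {p, q, r}")
  case True
  have nz: "p - q \<noteq> 0" "p - r \<noteq> 0" "q - r \<noteq> 0" "q - p \<noteq> 0" "r - p \<noteq> 0" "r - q \<noteq> 0"
    using assms by auto
  have "f r = f p + (r - p) * ((f q - f p) / (q - p)) + (r - p) * (r - q) * divdiff [p, q, r] f"
    unfolding divdiff_3_lagrange[OF assms] using nz
    by (simp add: divide_simps mult_eq_0_iff) (simp add: algebra_simps)
  with True nz show ?thesis by auto
next
  case False
  then have dist: "distinct [p, q, r, x]" using assms by auto
  have nz: "x - p \<noteq> 0" "x - q \<noteq> 0" "x - r \<noteq> 0" "p - q \<noteq> 0" "p - r \<noteq> 0" "q - r \<noteq> 0"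
    using dist by auto
  have inv: "(x - p) * inverse (x - p) = 1" "(x - q) * inverse (x - q) = 1"
    "(x - r) * inverse (x - r) = 1" "(p - q) * inverse (p - q) = 1"
    "(p - r) * inverse (p - r) = 1" "(q - r) * inverse (q - r) = 1"
    using nz by auto
  have neg: "inverse (p - x) = - inverse (x - p)" "inverse (q - x) = - inverse (x - q)"
    "inverse (r - x) = - inverse (x - r)" "inverse (q - p) = - inverse (p - q)"
    "inverse (r - p) = - inverse (p - r)" "inverse (r - q) = - inverse (q - r)"
    by (simp_all flip: inverse_minus_eq)
  have "divdiff [p, q] f = (f q - f p) / (q - p)" by simp
  then show ?thesis
    unfolding divdiff_4_lagrange[OF dist] divdiff_3_lagrange[OF assms]
    by (simp only: divide_inverse inverse_mult_distrib neg) (use inv in algebra)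
qed

lemma mono_on_divdiff_if_3_convex:
  assumes "m_convex_on 3 I f" "distinct [p, q, r]" "{p, q, r} \<subseteq> I"
  shows "mono_on (I - {p, q, r}) (\<lambda>x. divdiff [p, q, r, x] f)"
proof (rule mono_onI)
  fix x y assume xy: "x \<in> I - {p, q, r}" "y \<in> I - {p, q, r}" "x \<le> y"
  show "divdiff [p, q, r, x] f \<le> divdiff [p, q, r, y] f"
  proof (cases "x = y")
    case False
    with xy assms have dist: "distinct [x, p, q, r, y]" "x < y" by auto
    with xy assms have "divdiff [x, p, q, r, y] f \<ge> 0"
      unfolding m_convex_on_def by (auto elim!: allE[of _ "[x, p, q, r, y]"])
    with dist show ?thesis by (simp only: divdiff_5_common_nodes zero_le_divide_iff) simp
  qed simp
qed

lemma mono_on_extend_to_Icc: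
  fixes h :: "'a::linorder \<Rightarrow> 'b::conditionally_complete_linorder"
  assumes "mono_on S h" "S \<subseteq> {lo..hi}" "lo \<in> S" "hi \<in> S"
  obtains g where "mono_on {lo..hi} g" "\<And>x. x \<in> S \<Longrightarrow> g x = h x"
proof
  define g where "g x = Sup (h ` (S \<inter> {..x}))" for x
  have bdd: "bdd_above (h ` (S \<inter> {..x}))" for x
    using assms by (intro bdd_aboveI[of _ "h hi"]) (auto simp: mono_on_def)
  show "mono_on {lo..hi} g"
    unfolding g_def using assms bdd by (intro mono_onI cSup_subset_mono) auto
  show "g x = h x" if "x \<in> S" for x
    unfolding g_def using assms that
    by (intro cSup_eq_maximum) (auto simp: mono_on_def)
qed

lemma integrable_on_continuous_mult_mono_on:
  fixes w g :: "real \<Rightarrow> real"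
  assumes "continuous_on {c..d} w" "mono_on {c..d} g"
  shows "(\<lambda>x. w x * g x) integrable_on {c..d}"
proof -
  obtain B where B: "\<And>x. x \<in> {c..d} \<Longrightarrow> \<bar>w x\<bar> \<le> B"
    using compact_continuous_image[OF assms(1)] compact_imp_bounded
    by (metis bounded_real imageI compact_Icc)
  have g: "integrable (lebesgue_on {c..d}) g"
    using assms(2) by (rule integrable_mono_on)
  have "integrable (lebesgue_on {c..d}) (\<lambda>x. w x * g x)"
  proof (rule Bochner_Integration.integrable_bound)
    show "integrable (lebesgue_on {c..d}) (\<lambda>x. B * g x)"
      using g by simp
    have "w \<in> borel_measurable (lebesgue_on {c..d})"
      using assms(1) by (simp add: continuous_imp_measurable_on_sets_lebesgue)
    moreover have "g \<in> borel_measurable (lebesgue_on {c..d})"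
      using g by (rule borel_measurable_integrable)
    ultimately show "(\<lambda>x. w x * g x) \<in> borel_measurable (lebesgue_on {c..d})"
      by measurable
    show "AE x in lebesgue_on {c..d}. norm (w x * g x) \<le> norm (B * g x)"
      by (rule AE_I2) (use B in \<open>force simp: abs_mult intro!: mult_right_mono\<close>)
  qed
  then show ?thesis by (simp add: integrable_on_lebesgue_on)
qed

lemma integrable_on_if_3_convex:
  fixes f :: "real \<Rightarrow> real"
  assumes "m_convex_on 3 {c..d} f"
  shows "f integrable_on {c..d}"
proof (cases "c < d")
  case False
  then show ?thesis
    by (metis atLeastatMost_empty' integrable_on_empty integrable_on_refl cbox_interval
        linorder_neqE_linordered_idom not_less)
next
  case True
  define p where "p = c + (d - c) / 4"
  define q where "q = c + (d - c) / 2"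
  define r where "r = c + 3 * (d - c) / 4"
  have nodes: "distinct [p, q, r]" "{p, q, r} \<subseteq> {c..d}" "c \<notin> {p, q, r}" "d \<notin> {p, q, r}"
    using True by (auto simp: p_def q_def r_def field_simps)
  have "mono_on ({c..d} - {p, q, r}) (\<lambda>x. divdiff [p, q, r, x] f)"
    using assms nodes(1,2) by (rule mono_on_divdiff_if_3_convex)
  then obtain g where g: "mono_on {c..d} g"
    and g_eq: "\<And>x. x \<in> {c..d} - {p, q, r} \<Longrightarrow> g x = divdiff [p, q, r, x] f"
    by (rule mono_on_extend_to_Icc) (use nodes True in auto)
  \<comment> \<open>at the nodes \<open>?\<omega>\<close> vanishes, so the monotone extension \<open>g\<close> can replace the divided difference\<close>
  let ?N = "\<lambda>x. f p + (x - p) * divdiff [p, q] f + (x - p) * (x - q) * divdiff [p, q, r] f"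
  let ?\<omega> = "\<lambda>x. (x - p) * (x - q) * (x - r)"
  have "(\<lambda>x. ?N x + ?\<omega> x * g x) integrable_on {c..d}"
    by (intro integrable_add integrable_continuous_interval integrable_on_continuous_mult_mono_on g
        continuous_intros)
  moreover have "?N x + ?\<omega> x * g x = f x" if "x \<in> {c..d}" for x
  proof -
    have "?\<omega> x * g x = ?\<omega> x * divdiff [p, q, r, x] f"
      using g_eq[of x] that by (cases "x \<in> {p, q, r}") auto
    then show ?thesis using newton_interpolation_3[OF nodes(1), of f x] by linarith
  qed
  ultimately show ?thesis by (rule integrable_eq)
qed

lemma even_part_newton_interpolation:
  fixes f :: "real \<Rightarrow> real"
  assumes "a \<noteq> 0"
  shows "f x + f (- x) = 2 * f 0 + (x / a)\<^sup>2 * (f a + f (- a) - 2 * f 0)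
    + x * (x\<^sup>2 - a\<^sup>2) * (divdiff [- a, 0, a, x] f - divdiff [- a, 0, a, - x] f)"
proof -
  have nodes: "distinct [- a, 0, a]" using assms by auto
  define B where "B = divdiff [- a, 0] f"
  define C where "C = divdiff [- a, 0, a] f"
  define D where "D y = divdiff [- a, 0, a, y] f" for y
  have aB: "a * B = f 0 - f (- a)" using assms by (simp add: B_def field_simps)
  have C: "2 * a\<^sup>2 * C = f a + f (- a) - 2 * f 0"
    using assms by (simp add: C_def divdiff_3_lagrange[OF nodes] field_simps power2_eq_square)
  have newton: "f y = f (- a) + (y + a) * B + (y + a) * y * C + (y + a) * y * (y - a) * D y" for y
    using newton_interpolation_3[OF nodes, of f y] by (simp add: B_def C_def D_def)
  have "f x + f (- x) = 2 * (f (- a) + a * B) + 2 * x\<^sup>2 * C + x * (x\<^sup>2 - a\<^sup>2) * (D x - D (- x))"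
    using newton[of x] newton[of "- x"] by (simp add: algebra_simps power2_eq_square)
  also have "2 * x\<^sup>2 * C = (x / a)\<^sup>2 * (2 * a\<^sup>2 * C)"
    using assms by (simp add: power_divide)
  finally show ?thesis by (simp only: aB C D_def) simp
qed

lemma sign_change_mult_bound:
  fixes E w :: "'a::linorder \<Rightarrow> real"
  assumes "mono_on T E" "x\<^sub>0 \<in> T" "x\<^sub>0 < a" "y\<^sub>0 \<in> T" "a < y\<^sub>0"
    and "\<And>x. x \<in> T \<Longrightarrow> x \<le> a \<Longrightarrow> w x \<le> 0" "\<And>x. x \<in> T \<Longrightarrow> a \<le> x \<Longrightarrow> 0 \<le> w x"
  obtains L where "\<And>x. x \<in> T \<Longrightarrow> w x * L \<le> w x * E x"
proof
  define L where "L = Sup (E ` {x \<in> T. x < a})"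
  fix x assume x: "x \<in> T"
  consider "x < a" | "x = a" | "a < x" by fastforce
  then show "w x * L \<le> w x * E x"
  proof cases
    case 1
    have "bdd_above (E ` {x \<in> T. x < a})"
      using assms by (intro bdd_aboveI[of _ "E y\<^sub>0"]) (auto simp: mono_on_def)
    with x 1 have "E x \<le> L" unfolding L_def by (intro cSUP_upper) auto
    with x 1 assms(6) show ?thesis by (intro mult_left_mono_neg) auto
  next
    case 2
    with x assms(6,7) have "w x = 0" by (intro order_antisym) auto
    then show ?thesis by simp
  next
    case 3
    have "L \<le> E x"
      unfolding L_def using assms x 3 by (intro cSUP_least) (auto simp: mono_on_def)
    with x 3 assms(7) show ?thesis by (intro mult_left_mono) auto
  qed
qed

lemma has_integral_cubic_0_1:
  fixes y k l a :: real
  assumes "a \<noteq> 0"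
  shows "((\<lambda>x. 2 * y + (x / a)\<^sup>2 * k + x * (x\<^sup>2 - a\<^sup>2) * l) has_integral
    2 * y + k / (3 * a\<^sup>2) + l * (1 / 4 - a\<^sup>2 / 2)) {0..1}"
proof -
  define F where "F x = 2 * y * x + k * x ^ 3 / (3 * a\<^sup>2) + l * (x ^ 4 / 4 - a\<^sup>2 * x\<^sup>2 / 2)" for x
  have "((\<lambda>x. 2 * y + (x / a)\<^sup>2 * k + x * (x\<^sup>2 - a\<^sup>2) * l) has_integral F 1 - F 0) {0..1}"
  proof (rule fundamental_theorem_of_calculus)
    fix x :: real
    have "(F has_real_derivative 2 * y + (x / a)\<^sup>2 * k + x * (x\<^sup>2 - a\<^sup>2) * l) (at x within {0..1})"
      unfolding F_def using assms
      by (auto intro!: derivative_eq_intros simp: field_simps power2_eq_square power3_eq_cube)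
    then show "(F has_vector_derivative 2 * y + (x / a)\<^sup>2 * k + x * (x\<^sup>2 - a\<^sup>2) * l)
        (at x within {0..1})"
      by (simp add: has_real_derivative_iff_has_vector_derivative)
  qed simp
  then show ?thesis by (simp add: F_def)
qed

lemma integral_even_part:
  fixes f :: "real \<Rightarrow> real"
  assumes "f integrable_on {-c..c}" "0 \<le> c"
  shows "(\<lambda>x. f x + f (- x)) integrable_on {0..c}"
    and "integral {-c..c} f = integral {0..c} (\<lambda>x. f x + f (- x))"
proof -
  have left: "f integrable_on {-c..0}" and right: "f integrable_on {0..c}"
    using assms by (auto intro: integrable_subinterval_real)
  have reflected: "(\<lambda>x. f (- x)) integrable_on {0..c}"
    using Henstock_Kurzweil_Integration.integrable_reflect_real[where a = "- c" and b = 0 and f = f] left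
    by simp
  with right show "(\<lambda>x. f x + f (- x)) integrable_on {0..c}"
    by (rule integrable_add)
  have "integral {-c..c} f = integral {-c..0} f + integral {0..c} f"
    using Henstock_Kurzweil_Integration.integral_combine[of "-c" 0 c f] assms by simp
  also have "integral {-c..0} f = integral {0..c} (\<lambda>x. f (- x))"
    using Henstock_Kurzweil_Integration.integral_reflect_real[where a = "- c" and b = 0 and f = f]
    by simp
  also have "integral {0..c} (\<lambda>x. f (- x)) + integral {0..c} f = integral {0..c} (\<lambda>x. f x + f (- x))"
    using reflected right by (simp add: integral_add)
  finally show "integral {-c..c} f = integral {0..c} (\<lambda>x. f x + f (- x))" .
qed

lemma even_part_upper_bound_if_3_convex:
  fixes f :: "real \<Rightarrow> real"
  assumes "m_convex_on 3 {-c..c} f" "0 < a" "a \<le> c" "0 \<le> x" "x \<le> a"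
  shows "f x + f (- x) \<le> 2 * f 0 + (x / a)\<^sup>2 * (f a + f (- a) - 2 * f 0)"
proof -
  let ?D = "\<lambda>y. divdiff [- a, 0, a, y] f"
  have "x * (x\<^sup>2 - a\<^sup>2) * (?D x - ?D (- x)) \<le> 0"
  proof (cases "x = 0 \<or> x = a")
    case False
    with assms have x: "0 < x" "x < a" by auto
    have D: "mono_on ({-c..c} - {- a, 0, a}) ?D"
      using assms by (intro mono_on_divdiff_if_3_convex) auto
    have "x\<^sup>2 \<le> a\<^sup>2" using x by (intro power_mono) auto
    then have "x * (x\<^sup>2 - a\<^sup>2) \<le> 0" using x by (intro mult_nonneg_nonpos) auto
    moreover have "?D (- x) \<le> ?D x"
      using assms x by (intro mono_onD[OF D]) auto
    then have "0 \<le> ?D x - ?D (- x)" by linarith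
    ultimately show ?thesis by (rule mult_nonpos_nonneg)
  next
    case True
    then have "x * (x\<^sup>2 - a\<^sup>2) = 0" by auto
    then show ?thesis by (simp only: mult_zero_left order_refl)
  qed
  then show ?thesis
    using even_part_newton_interpolation[of a f x] assms(2) by linarith
qed

lemma even_part_lower_bound_if_3_convex:
  fixes f :: "real \<Rightarrow> real"
  assumes "m_convex_on 3 {-c..c} f" "0 < a" "a < c"
  obtains L where "\<And>x. x \<in> {0..c} \<Longrightarrow>
    2 * f 0 + (x / a)\<^sup>2 * (f a + f (- a) - 2 * f 0) + x * (x\<^sup>2 - a\<^sup>2) * L \<le> f x + f (- x)"
proof -
  let ?D = "\<lambda>y. divdiff [- a, 0, a, y] f"
  let ?E = "\<lambda>y. ?D y - ?D (- y)"
  let ?T = "{0<..c} - {a}"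
  let ?w = "\<lambda>x::real. x * (x\<^sup>2 - a\<^sup>2)"
  have D: "mono_on ({-c..c} - {- a, 0, a}) ?D"
    using assms by (intro mono_on_divdiff_if_3_convex) auto
  have E: "mono_on ?T ?E"
  proof (rule mono_onI)
    fix x y assume "x \<in> ?T" "y \<in> ?T" "x \<le> y"
    then have "?D x \<le> ?D y" "?D (- y) \<le> ?D (- x)"
      using assms by (intro mono_onD[OF D]; auto)+
    then show "?E x \<le> ?E y" by linarith
  qed
  have neg: "?w x \<le> 0" if "x \<in> ?T" "x \<le> a" for x
    using that power_mono[of x a 2] by (auto intro: mult_nonneg_nonpos)
  have pos: "0 \<le> ?w x" if "x \<in> ?T" "a \<le> x" for x
    using that assms power_mono[of a x 2] by auto
  have "a / 2 \<in> ?T" "a / 2 < a" "c \<in> ?T" "a < c" using assms by auto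
  then obtain L where L: "\<And>x. x \<in> ?T \<Longrightarrow> ?w x * L \<le> ?w x * ?E x"
    using sign_change_mult_bound[where a = a and w = ?w, OF E _ _ _ _ neg pos] by blast
  show thesis
  proof
    fix x assume x: "x \<in> {0..c}"
    have "?w x * L \<le> ?w x * ?E x"
    proof (cases "x \<in> ?T")
      case False
      with x have "?w x = 0" by auto
      then show ?thesis by (simp only: mult_zero_left order_refl)
    qed (rule L)
    then show "2 * f 0 + (x / a)\<^sup>2 * (f a + f (- a) - 2 * f 0) + ?w x * L \<le> f x + f (- x)"
      using even_part_newton_interpolation[of a f x] assms(2) by linarith
  qed
qed

theorem proposition3:
  fixes f :: "real \<Rightarrow> real"
  assumes "m_convex_on 3 {-1..1} f"
  shows "f (- sqrt 3 / 3) + f (sqrt 3 / 3)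
           \<le> 2 / 3 * (f (- sqrt 2 / 2) + f 0 + f (sqrt 2 / 2)) \<and>
         2 / 3 * (f (- sqrt 2 / 2) + f 0 + f (sqrt 2 / 2)) \<le> integral {-1..1} f"
proof -
  define a where "a = sqrt 2 / 2"
  define b where "b = sqrt 3 / 3"
  have a2: "a\<^sup>2 = 1 / 2" and b2: "b\<^sup>2 = 1 / 3" by (simp_all add: a_def b_def power_divide)
  have ab: "0 < b" "b < a" "a < 1"
    using a2 b2 by (auto simp: a_def b_def intro: power_less_imp_less_base[of _ 2])
  let ?K = "f a + f (- a) - 2 * f 0"
  have "f b + f (- b) \<le> 2 * f 0 + (b / a)\<^sup>2 * ?K"
    using assms ab by (intro even_part_upper_bound_if_3_convex) auto
  then have upper: "f (- b) + f b \<le> 2 / 3 * (f (- a) + f 0 + f a)"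
    by (simp add: power_divide a2 b2 field_simps)
  obtain L where L: "\<And>x. x \<in> {0..1} \<Longrightarrow>
      2 * f 0 + (x / a)\<^sup>2 * ?K + x * (x\<^sup>2 - a\<^sup>2) * L \<le> f x + f (- x)"
    using even_part_lower_bound_if_3_convex[OF assms, of a] ab by (meson order.strict_trans)
  \<comment> \<open>\<open>a\<^sup>2 = 1/2\<close> makes the coefficient of \<open>L\<close> vanish: this is what singles out the nodes \<open>\<plusminus>\<surd>2/2\<close>\<close>
  have poly: "((\<lambda>x. 2 * f 0 + (x / a)\<^sup>2 * ?K + x * (x\<^sup>2 - a\<^sup>2) * L)
      has_integral 2 / 3 * (f (- a) + f 0 + f a)) {0..1}"
    using ab by (intro has_integral_eq_rhs[OF has_integral_cubic_0_1[of a "f 0" ?K L]])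
      (auto simp: a2 field_simps)
  note even = integral_even_part[OF integrable_on_if_3_convex[OF assms] zero_le_one]
  have "2 / 3 * (f (- a) + f 0 + f a) \<le> integral {0..1} (\<lambda>x. f x + f (- x))"
    by (rule has_integral_le[OF poly integrable_integral[OF even(1)] L])
  then have lower: "2 / 3 * (f (- a) + f 0 + f a) \<le> integral {-1..1} f"
    by (simp only: even(2))
  have "- sqrt 3 / 3 = - b" "- sqrt 2 / 2 = - a" by (simp_all add: a_def b_def)
  with upper lower show ?thesis by (simp add: a_def b_def)
qed

end
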